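(* Let $K$ satisfy the standing kernel assumptions (see context) and assume in addition that $K(x,y)\ge c_0$ for all $x,y>0$, for some $c_0>0$. Let $f$ be a self-similar profile for $K$ with $\int_0^\infty x f(x)\,dx=M<\infty$. Then $\lim_{q\to0}\mathcal{M}(f,f)(q)=0$.
   Context: Standing kernel assumptions: $\alpha\in[0,1)$, $\varepsilon>0$, $C_0>0$; $K:(0,\infty)^2\to[0,\infty)$ is symmetric, homogeneous of degree zero, differentiable, and with $W(x,y):=K(x,y)-2$: $W\ge-\varepsilon$, $W(x,y)\le \varepsilon((x/y)^{\alpha}+(y/x)^{\alpha})$, $|\partial_x K(x,y)|\le \frac{C_0\varepsilon}{x}((x/y)^{\alpha}+(y/x)^{\alpha})$ for all $x,y>0$. A self-similar profile for $K$ is $f\in L^1_{loc}(0,\infty)$, $f\ge0$, $\int_0^\infty xf\,dx<\infty$, with $x^2 f(x)=\int_0^x dy\int_{x-y}^\infty dz\,K(y,z)\,y\,f(y)f(z)$ for a.e. $x>0$. For $q\ge 0$ define $$\mathcal{M}(f,f)(q)=\frac12\int_0^\infty\int_0^\infty W(x,y)f(x)f(y)(1-e^{-qx})(1-e^{-qy})\,dx\,dy.$$ *)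

theory Defs
  imports "HOL-Analysis.Analysis"
begin

definition kernel_assumptions ::
  "real \<Rightarrow> real \<Rightarrow> real \<Rightarrow> (real \<Rightarrow> real \<Rightarrow> real) \<Rightarrow> bool" where
  "kernel_assumptions \<alpha> \<epsilon> C0 K \<longleftrightarrow>
     0 \<le> \<alpha> \<and> \<alpha> < 1 \<and> \<epsilon> > 0 \<and> C0 > 0 \<and>
     (\<forall>x>0. \<forall>y>0. K x y \<ge> 0) \<and>
     (\<forall>x>0. \<forall>y>0. K x y = K y x) \<and>
     (\<forall>x>0. \<forall>y>0. \<forall>l>0. K (l * x) (l * y) = K x y) \<and>
     (\<forall>x>0. \<forall>y>0. (\<lambda>p. K (fst p) (snd p)) differentiable (at (x, y))) \<and>
     (\<forall>x>0. \<forall>y>0. K x y - 2 \<ge> - \<epsilon>) \<and>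
     (\<forall>x>0. \<forall>y>0. K x y - 2 \<le> \<epsilon> * ((x / y) powr \<alpha> + (y / x) powr \<alpha>)) \<and>
     (\<forall>x>0. \<forall>y>0. \<bar>deriv (\<lambda>t. K t y) x\<bar>
                    \<le> C0 * \<epsilon> / x * ((x / y) powr \<alpha> + (y / x) powr \<alpha>))"

text \<open>Self-similar profile: f >= 0, locally integrable on (0,oo), finite first moment,
  and the integral equation for a.e. x > 0 (nonnegative integrands, so the
  nonnegative Lebesgue integral is used).\<close>
definition self_similar_profile :: "(real \<Rightarrow> real \<Rightarrow> real) \<Rightarrow> (real \<Rightarrow> real) \<Rightarrow> bool" where
  "self_similar_profile K f \<longleftrightarrow>
     (\<forall>x>0. f x \<ge> 0) \<and>
     (\<forall>a b. 0 < a \<longrightarrow> set_integrable lborel {a..b} f) \<and>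
     set_integrable lborel {0<..} (\<lambda>x. x * f x) \<and>
     (AE x in lborel. x > 0 \<longrightarrow>
        ennreal (x\<^sup>2 * f x) =
          (\<integral>\<^sup>+ y. (\<integral>\<^sup>+ z. ennreal (K y z * y * f y * f z) * indicator {x - y<..} z \<partial>lborel)
                     * indicator {0<..<x} y \<partial>lborel))"

text \<open>M(f,f)(q), with W = K - 2, as a Lebesgue (Bochner) integral over (0,oo)^2.\<close>
definition Mff :: "(real \<Rightarrow> real \<Rightarrow> real) \<Rightarrow> (real \<Rightarrow> real) \<Rightarrow> real \<Rightarrow> real" where
  "Mff K f q = 1/2 * (\<integral>p. indicator ({0<..} \<times> {0<..}) p *
        ((K (fst p) (snd p) - 2) * f (fst p) * f (snd p)
         * (1 - exp (- q * fst p)) * (1 - exp (- q * snd p))) \<partial>(lborel \<Otimes>\<^sub>M lborel))"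

end

theory Submission
  imports Defs
begin

text \<open>
  As \<open>q \<rightarrow> 0\<close>, the factor \<open>(1 - e^{-qx})(1 - e^{-qy})\<close> tends to 0 pointwise and is bounded
  by \<open>min(1,x) min(1,y)\<close>, while \<open>|W(x,y)| \<le> \<epsilon> (1 + (x/y)^\<alpha> + (y/x)^\<alpha>)\<close>. Since
  \<open>(1 + (x/y)^\<alpha> + (y/x)^\<alpha>) min(1,x) min(1,y) \<le> 3 max(1,x) max(1,y)\<close>, dominated convergence
  applies once \<open>f\<close> is integrable near 0, in addition to having a finite first moment.

  Integrability near 0 is where \<open>K \<ge> c0\<close> enters: the equation gives
  \<open>x^2 f(x) \<ge> c0 (\<integral>_0^x y f(y) dy) (\<integral>_x^\<infinity> f)\<close>. If \<open>\<integral>_0^1 f = \<infinity>\<close>, the last factor exceeds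
  \<open>2/c0\<close> on some \<open>(0,\<delta>)\<close>, so there \<open>x^2 f(x) \<ge> 2 \<integral>_0^x y f(y) dy\<close>. Dividing by \<open>x^2\<close>,
  integrating over \<open>(\<eta>,\<delta>)\<close> and exchanging the order of integration yields
  \<open>\<integral>_\<eta>^\<delta> f \<le> (2/\<delta>) \<integral> y f(y) dy\<close> uniformly in \<open>\<eta>\<close>, a contradiction.
\<close>

lemma borel_measurable_indicator_pos_times:
  fixes f :: "real \<Rightarrow> real"
  assumes "\<And>a b. 0 < a \<Longrightarrow> set_integrable lborel {a..b} f"
  shows "(\<lambda>x. indicator {0<..} x * f x) \<in> borel_measurable borel"
proof (rule borel_measurable_LIMSEQ_real)
  fix i :: nat
  have "set_integrable lborel {1/Suc i..Suc i} f" using assms by simp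
  then show "(\<lambda>x. indicator {1/Suc i..real (Suc i)} x * f x) \<in> borel_measurable borel"
    unfolding set_integrable_def by (auto dest: borel_measurable_integrable)
next
  fix x :: real
  show "(\<lambda>i. indicator {1/Suc i..real (Suc i)} x * f x) \<longlonglongrightarrow> indicator {0<..} x * f x"
  proof (cases "x > 0")
    case True
    obtain N :: nat where N: "max x (1/x) \<le> N" using real_arch_simple by blast
    have "indicator {1/Suc i..real (Suc i)} x * f x = indicator {0<..} x * f x" if "N \<le> i" for i
    proof -
      have "max x (1/x) \<le> Suc i" using N that by linarith
      then show ?thesis using True by (simp add: indicator_def field_simps)
    qed
    then show ?thesis by (intro tendsto_eventually eventually_sequentiallyI)
  next
    case False
    have "\<not> 1/Suc i \<le> x" for i :: nat
      using False by (smt (verit) of_nat_0_less_iff zero_less_Suc divide_pos_pos)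
    then show ?thesis using False by (simp add: indicator_def)
  qed
qed

lemma self_similar_profile_restrict_pos:
  assumes "self_similar_profile K f"
  shows "self_similar_profile K (\<lambda>x. indicator {0<..} x * f x)"
proof -
  let ?g = "\<lambda>x. indicator {0<..} x * f x"
  have "set_integrable lborel {a..b} ?g = set_integrable lborel {a..b} f" if "0 < a" for a b
    unfolding set_integrable_def using that
    by (intro Bochner_Integration.integrable_cong) (auto simp: indicator_def)
  moreover have "set_integrable lborel {0<..} (\<lambda>x. x * ?g x) = set_integrable lborel {0<..} (\<lambda>x. x * f x)"
    unfolding set_integrable_def
    by (intro Bochner_Integration.integrable_cong) (auto simp: indicator_def)
  moreover have
    "(\<integral>\<^sup>+ y. (\<integral>\<^sup>+ z. ennreal (K y z * y * ?g y * ?g z) * indicator {x - y<..} z \<partial>lborel)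
        * indicator {0<..<x} y \<partial>lborel) =
     (\<integral>\<^sup>+ y. (\<integral>\<^sup>+ z. ennreal (K y z * y * f y * f z) * indicator {x - y<..} z \<partial>lborel)
        * indicator {0<..<x} y \<partial>lborel)" for x
    by (auto intro!: nn_integral_cong split: split_indicator)
  ultimately show ?thesis
    using assms unfolding self_similar_profile_def by (simp cong: conj_cong)
qed

lemma Mff_restrict_pos: "Mff K f = Mff K (\<lambda>x. indicator {0<..} x * f x)"
  unfolding Mff_def
  by (intro ext arg_cong[where f="\<lambda>x. 1/2 * x"] Bochner_Integration.integral_cong)
     (auto simp: indicator_def)

lemma nn_integral_Ioo_eq_SUP_Ico:
  fixes h :: "real \<Rightarrow> ennreal" and b :: real
  assumes [measurable]: "h \<in> borel_measurable borel" and "0 < b"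
  shows "(\<integral>\<^sup>+x. h x * indicator {0<..<b} x \<partial>lborel)
       = (SUP n. \<integral>\<^sup>+x. h x * indicator {b/Suc n..<b} x \<partial>lborel)"
proof -
  have mono: "incseq (\<lambda>n x. h x * indicator {b/Suc n..<b} x)"
  proof (intro incseq_SucI le_funI mult_left_mono)
    fix n x
    have "b / Suc (Suc n) \<le> b / Suc n" using \<open>0 < b\<close> by (intro divide_left_mono) auto
    then show "indicator {b/Suc n..<b} x \<le> (indicator {b/Suc (Suc n)..<b} x :: ennreal)"
      by (auto simp: indicator_def)
  qed simp
  have "h x * indicator {0<..<b} x = (SUP n. h x * indicator {b/Suc n..<b} x)" for x
  proof (cases "0 < x \<and> x < b")
    case True
    obtain n :: nat where "b / x \<le> n" using real_arch_simple by blast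
    then have "b / Suc n \<le> x" using True by (simp add: field_simps)
    then have "h x \<le> (SUP n. h x * indicator {b/Suc n..<b} x)"
      using True by (intro SUP_upper2[of n]) auto
    moreover have "(SUP n. h x * indicator {b/Suc n..<b} x) \<le> h x"
      by (intro SUP_least) (simp add: indicator_def)
    ultimately show ?thesis using True by simp
  next
    case False
    have "0 < b / Suc n" for n using \<open>0 < b\<close> by simp
    then have "x \<notin> {b/Suc n..<b}" for n using False by (meson atLeastLessThan_iff less_le_trans)
    then show ?thesis using False by simp
  qed
  then have "(\<integral>\<^sup>+x. h x * indicator {0<..<b} x \<partial>lborel)
      = (\<integral>\<^sup>+x. (SUP n. h x * indicator {b/Suc n..<b} x) \<partial>lborel)"
    by simp
  also have "\<dots> = (SUP n. \<integral>\<^sup>+x. h x * indicator {b/Suc n..<b} x \<partial>lborel)"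
    by (rule nn_integral_monotone_convergence_SUP[OF mono]) measurable
  finally show ?thesis .
qed

lemma nn_integral_powr_Ioo:
  fixes y \<delta> \<beta> :: real
  assumes "0 < y" "y \<le> \<delta>" "0 < \<beta>"
  shows "(\<integral>\<^sup>+x. ennreal (x powr (-1-\<beta>)) * indicator {y<..<\<delta>} x \<partial>lborel)
         = ennreal ((y powr -\<beta> - \<delta> powr -\<beta>) / \<beta>)"
proof -
  have "((\<lambda>x. x powr (-1-\<beta>)) has_integral (- (\<delta> powr -\<beta>) / \<beta> - - (y powr -\<beta>) / \<beta>)) {y..\<delta>}"
  proof (rule fundamental_theorem_of_calculus[OF \<open>y \<le> \<delta>\<close>])
    fix x assume "x \<in> {y..\<delta>}"
    then have "0 < x" using assms by auto
    have "((\<lambda>x. - (x powr -\<beta>) / \<beta>) has_real_derivative - (-\<beta> * x powr (-\<beta> - 1)) / \<beta>) (at x)"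
      by (intro DERIV_cdivide DERIV_minus has_real_derivative_powr \<open>0 < x\<close>)
    moreover have "- (-\<beta> * x powr (-\<beta> - 1)) / \<beta> = x powr (-1-\<beta>)"
    proof -
      have "x powr (-\<beta> - 1) = x powr (-1 - \<beta>)"
        by (rule arg_cong[where f="\<lambda>t. x powr t"]) simp
      then show ?thesis using \<open>0 < \<beta>\<close> by simp
    qed
    ultimately show "((\<lambda>x. - (x powr -\<beta>) / \<beta>) has_vector_derivative x powr (-1-\<beta>)) (at x within {y..\<delta>})"
      by (simp add: has_real_derivative_iff_has_vector_derivative[symmetric] has_field_derivative_at_within)
  qed
  then have "((\<lambda>x. x powr (-1-\<beta>)) has_integral ((y powr -\<beta> - \<delta> powr -\<beta>) / \<beta>)) {y<..<\<delta>}"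
    by (simp add: has_integral_Icc_iff_Ioo diff_divide_distrib)
  from nn_integral_has_integral_lebesgue'[OF _ this] show ?thesis by simp
qed

section \<open>A Hardy-type inequality\<close>

lemma nn_integral_powr_running_integral_eq:
  fixes h :: "real \<Rightarrow> ennreal" and \<beta> \<delta> \<eta> :: real
  assumes [measurable]: "h \<in> borel_measurable borel" and "0 < \<beta>" "0 < \<eta>"
  shows "(\<integral>\<^sup>+x. ennreal (x powr (-1-\<beta>)) * indicator {\<eta><..<\<delta>} x *
             (\<integral>\<^sup>+y. h y * indicator {\<eta>..<x} y \<partial>lborel) \<partial>lborel)
       = (\<integral>\<^sup>+y. h y * indicator {\<eta>..<\<delta>} y * ennreal ((y powr -\<beta> - \<delta> powr -\<beta>) / \<beta>) \<partial>lborel)"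
proof -
  have [measurable]: "Measurable.pred (borel \<Otimes>\<^sub>M borel) (\<lambda>p::real \<times> real. snd p \<in> {\<eta>..<fst p})"
    unfolding atLeastLessThan_iff by measurable
  have "(\<integral>\<^sup>+x. ennreal (x powr (-1-\<beta>)) * indicator {\<eta><..<\<delta>} x *
             (\<integral>\<^sup>+y. h y * indicator {\<eta>..<x} y \<partial>lborel) \<partial>lborel)
      = (\<integral>\<^sup>+x. \<integral>\<^sup>+y. ennreal (x powr (-1-\<beta>)) * indicator {\<eta><..<\<delta>} x *
             (h y * indicator {\<eta>..<x} y) \<partial>lborel \<partial>lborel)"
    by (intro nn_integral_cong nn_integral_cmult[symmetric]) measurable
  also have "\<dots> = (\<integral>\<^sup>+y. \<integral>\<^sup>+x. ennreal (x powr (-1-\<beta>)) * indicator {\<eta><..<\<delta>} x *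
             (h y * indicator {\<eta>..<x} y) \<partial>lborel \<partial>lborel)"
    by (rule lborel_pair.Fubini'[symmetric]) measurable
  also have "\<dots> = (\<integral>\<^sup>+y. (h y * indicator {\<eta>..<\<delta>} y) *
             (\<integral>\<^sup>+x. ennreal (x powr (-1-\<beta>)) * indicator {y<..<\<delta>} x \<partial>lborel) \<partial>lborel)"
    by (subst nn_integral_cmult[symmetric])
       (measurable, auto intro!: nn_integral_cong simp: indicator_def mult_ac)
  also have "\<dots> = (\<integral>\<^sup>+y. h y * indicator {\<eta>..<\<delta>} y * ennreal ((y powr -\<beta> - \<delta> powr -\<beta>) / \<beta>) \<partial>lborel)"
  proof (intro nn_integral_cong)
    fix y
    show "h y * indicator {\<eta>..<\<delta>} y * (\<integral>\<^sup>+x. ennreal (x powr (-1-\<beta>)) * indicator {y<..<\<delta>} x \<partial>lborel)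
        = h y * indicator {\<eta>..<\<delta>} y * ennreal ((y powr -\<beta> - \<delta> powr -\<beta>) / \<beta>)"
      using nn_integral_powr_Ioo[of y \<delta> \<beta>] \<open>0 < \<eta>\<close> \<open>0 < \<beta>\<close> by (cases "\<eta> \<le> y \<and> y < \<delta>") auto
  qed
  finally show ?thesis .
qed

lemma nn_integral_powr_running_integral_le:
  fixes h :: "real \<Rightarrow> ennreal" and \<beta> \<delta> \<eta> :: real
  assumes [measurable]: "h \<in> borel_measurable borel" and "0 < \<eta>"
    and growth: "AE x in lborel. \<eta> < x \<and> x < \<delta> \<longrightarrow>
       ennreal (2 * \<beta>) * (\<integral>\<^sup>+y. h y * indicator {\<eta>..<x} y \<partial>lborel) \<le> ennreal x * h x"
  shows "ennreal (2 * \<beta>) * (\<integral>\<^sup>+x. ennreal (x powr (-1-\<beta>)) * indicator {\<eta><..<\<delta>} x *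
             (\<integral>\<^sup>+y. h y * indicator {\<eta>..<x} y \<partial>lborel) \<partial>lborel)
       \<le> (\<integral>\<^sup>+x. ennreal (x powr -\<beta>) * h x * indicator {\<eta>..<\<delta>} x \<partial>lborel)"
proof -
  have [measurable]: "Measurable.pred (borel \<Otimes>\<^sub>M borel) (\<lambda>p::real \<times> real. snd p \<in> {\<eta>..<fst p})"
    unfolding atLeastLessThan_iff by measurable
  have "ennreal (2 * \<beta>) * (\<integral>\<^sup>+x. ennreal (x powr (-1-\<beta>)) * indicator {\<eta><..<\<delta>} x *
             (\<integral>\<^sup>+y. h y * indicator {\<eta>..<x} y \<partial>lborel) \<partial>lborel)
      = (\<integral>\<^sup>+x. ennreal (x powr (-1-\<beta>)) * indicator {\<eta><..<\<delta>} x *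
             (ennreal (2 * \<beta>) * (\<integral>\<^sup>+y. h y * indicator {\<eta>..<x} y \<partial>lborel)) \<partial>lborel)"
    by (subst nn_integral_cmult[symmetric]) (measurable, simp add: mult_ac)
  also have "\<dots> \<le> (\<integral>\<^sup>+x. ennreal (x powr -\<beta>) * h x * indicator {\<eta>..<\<delta>} x \<partial>lborel)"
  proof (rule nn_integral_mono_AE)
    show "AE x in lborel. ennreal (x powr (-1-\<beta>)) * indicator {\<eta><..<\<delta>} x *
           (ennreal (2 * \<beta>) * (\<integral>\<^sup>+y. h y * indicator {\<eta>..<x} y \<partial>lborel))
          \<le> ennreal (x powr -\<beta>) * h x * indicator {\<eta>..<\<delta>} x"
      using growth
    proof eventually_elim
      case (elim x)
      show ?case
      proof (cases "\<eta> < x \<and> x < \<delta>")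
        case True
        then have "0 < x" using \<open>0 < \<eta>\<close> by simp
        have "x powr (-1-\<beta>) * x = x powr -\<beta>"
          using powr_mult_base[of x "-1-\<beta>"] \<open>0 < x\<close> by (simp add: mult.commute)
        then have "ennreal (x powr (-1-\<beta>)) * ennreal x = ennreal (x powr -\<beta>)"
          using \<open>0 < x\<close> by (simp add: ennreal_mult[symmetric])
        then have "ennreal (x powr (-1-\<beta>)) * (ennreal x * h x) = ennreal (x powr -\<beta>) * h x"
          by (simp add: mult.assoc[symmetric])
        moreover have "ennreal (x powr (-1-\<beta>)) * (ennreal (2 * \<beta>) * (\<integral>\<^sup>+y. h y * indicator {\<eta>..<x} y \<partial>lborel))
            \<le> ennreal (x powr (-1-\<beta>)) * (ennreal x * h x)"
          using True elim by (intro mult_left_mono) auto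
        ultimately show ?thesis using True by (simp add: indicator_def)
      qed (auto simp: indicator_def)
    qed
  qed
  finally show ?thesis .
qed

lemma nn_integral_powr_Ico_decompose:
  fixes h :: "real \<Rightarrow> ennreal" and \<beta> \<delta> \<eta> :: real
  assumes [measurable]: "h \<in> borel_measurable borel" and "0 < \<beta>" "0 < \<eta>"
  shows "(\<integral>\<^sup>+y. ennreal (y powr -\<beta>) * h y * indicator {\<eta>..<\<delta>} y \<partial>lborel)
       = ennreal \<beta> * (\<integral>\<^sup>+y. h y * indicator {\<eta>..<\<delta>} y * ennreal ((y powr -\<beta> - \<delta> powr -\<beta>) / \<beta>) \<partial>lborel)
         + ennreal (\<delta> powr -\<beta>) * (\<integral>\<^sup>+y. h y * indicator {\<eta>..<\<delta>} y \<partial>lborel)"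
proof -
  define D where "D y = (y powr -\<beta> - \<delta> powr -\<beta>) / \<beta>" for y
  have "ennreal (y powr -\<beta>) * h y * indicator {\<eta>..<\<delta>} y
      = ennreal \<beta> * (h y * indicator {\<eta>..<\<delta>} y * ennreal (D y))
        + ennreal (\<delta> powr -\<beta>) * (h y * indicator {\<eta>..<\<delta>} y)" for y
  proof (cases "\<eta> \<le> y \<and> y < \<delta>")
    case True
    then have "0 \<le> D y"
      unfolding D_def using \<open>0 < \<eta>\<close> \<open>0 < \<beta>\<close> by (auto intro!: divide_nonneg_pos powr_mono2')
    moreover have "y powr -\<beta> = \<beta> * D y + \<delta> powr -\<beta>"
      unfolding D_def using \<open>0 < \<beta>\<close> by simp
    ultimately have "ennreal (y powr -\<beta>) = ennreal \<beta> * ennreal (D y) + ennreal (\<delta> powr -\<beta>)"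
      using \<open>0 < \<beta>\<close> by (simp add: ennreal_mult)
    then show ?thesis using True by (simp add: distrib_left mult_ac)
  qed simp
  then have "(\<integral>\<^sup>+y. ennreal (y powr -\<beta>) * h y * indicator {\<eta>..<\<delta>} y \<partial>lborel)
      = (\<integral>\<^sup>+y. ennreal \<beta> * (h y * indicator {\<eta>..<\<delta>} y * ennreal (D y)) \<partial>lborel)
        + (\<integral>\<^sup>+y. ennreal (\<delta> powr -\<beta>) * (h y * indicator {\<eta>..<\<delta>} y) \<partial>lborel)"
    by (simp only:) (rule nn_integral_add, unfold D_def, measurable)
  then show ?thesis
    unfolding D_def by (simp add: nn_integral_cmult)
qed

lemma nn_integral_powr_weight_le:
  fixes h :: "real \<Rightarrow> ennreal" and \<beta> \<delta> \<eta> :: real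
  assumes [measurable]: "h \<in> borel_measurable borel"
    and "0 < \<beta>" "0 < \<eta>"
    and finite: "(\<integral>\<^sup>+y. ennreal (y powr -\<beta>) * h y * indicator {\<eta>..<\<delta>} y \<partial>lborel) \<noteq> \<infinity>"
    and growth: "AE x in lborel. \<eta> < x \<and> x < \<delta> \<longrightarrow>
       ennreal (2 * \<beta>) * (\<integral>\<^sup>+y. h y * indicator {\<eta>..<x} y \<partial>lborel) \<le> ennreal x * h x"
  shows "(\<integral>\<^sup>+y. ennreal (y powr -\<beta>) * h y * indicator {\<eta>..<\<delta>} y \<partial>lborel)
         \<le> ennreal (2 * \<delta> powr -\<beta>) * (\<integral>\<^sup>+y. h y * indicator {\<eta>..<\<delta>} y \<partial>lborel)"
proof -
  define I where "I = (\<integral>\<^sup>+y. ennreal (y powr -\<beta>) * h y * indicator {\<eta>..<\<delta>} y \<partial>lborel)"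
  define P where "P = (\<integral>\<^sup>+y. h y * indicator {\<eta>..<\<delta>} y \<partial>lborel)"
  define T where "T = (\<integral>\<^sup>+y. h y * indicator {\<eta>..<\<delta>} y * ennreal ((y powr -\<beta> - \<delta> powr -\<beta>) / \<beta>) \<partial>lborel)"
  define d where "d = \<delta> powr -\<beta>"
  have "0 \<le> d" unfolding d_def by simp
  have T_le: "ennreal (2 * \<beta>) * T \<le> I"
    using nn_integral_powr_running_integral_le[OF _ \<open>0 < \<eta>\<close> growth]
    unfolding T_def I_def by (simp only: nn_integral_powr_running_integral_eq[OF _ \<open>0 < \<beta>\<close> \<open>0 < \<eta>\<close>]) simp
  have I_eq: "I = ennreal \<beta> * T + ennreal d * P"
    unfolding I_def T_def P_def d_def by (rule nn_integral_powr_Ico_decompose) (use assms in auto)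
  have double: "ennreal (2 * c) * X = ennreal c * X + ennreal c * X" if "0 \<le> c" for c and X :: ennreal
    using ennreal_plus[OF that that] by (simp only: mult_2 distrib_right)
  \<comment> \<open>\<open>2\<beta>T \<le> \<beta>T + dP\<close>; finiteness of \<open>I\<close> is what makes cancelling \<open>\<beta>T\<close> legitimate.\<close>
  have "ennreal \<beta> * T \<noteq> \<infinity>"
    using finite I_eq unfolding I_def by auto
  moreover have "ennreal \<beta> * T + ennreal \<beta> * T \<le> ennreal \<beta> * T + ennreal d * P"
    using T_le I_eq double[of \<beta> T] \<open>0 < \<beta>\<close> by simp
  ultimately have "ennreal \<beta> * T \<le> ennreal d * P"
    by (simp add: ennreal_add_left_cancel_le)
  then have "I \<le> ennreal (2 * d) * P"
    unfolding I_eq double[OF \<open>0 \<le> d\<close>] by (rule add_right_mono)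
  then show ?thesis unfolding I_def P_def d_def .
qed

section \<open>Integrability of the profile near zero\<close>

lemma nn_integral_kernel_ge_tail:
  fixes f :: "real \<Rightarrow> real" and c0 x y :: real
  assumes [measurable]: "f \<in> borel_measurable borel" and nn: "\<And>x. 0 \<le> f x" and "0 \<le> c0"
    and K_ge: "\<And>x y. 0 < x \<Longrightarrow> 0 < y \<Longrightarrow> c0 \<le> K x y" and "0 < y" "y < x"
  shows "ennreal (c0 * (y * f y)) * (\<integral>\<^sup>+z. ennreal (f z) * indicator {x..} z \<partial>lborel)
           \<le> (\<integral>\<^sup>+z. ennreal (K y z * y * f y * f z) * indicator {x - y<..} z \<partial>lborel)"
proof -
  have "ennreal (c0 * (y * f y)) * (\<integral>\<^sup>+z. ennreal (f z) * indicator {x..} z \<partial>lborel)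
      = (\<integral>\<^sup>+z. ennreal (c0 * (y * f y)) * (ennreal (f z) * indicator {x..} z) \<partial>lborel)"
    by (rule nn_integral_cmult[symmetric]) measurable
  also have "\<dots> \<le> (\<integral>\<^sup>+z. ennreal (K y z * y * f y * f z) * indicator {x - y<..} z \<partial>lborel)"
  proof (intro nn_integral_mono)
    fix z
    show "ennreal (c0 * (y * f y)) * (ennreal (f z) * indicator {x..} z)
        \<le> ennreal (K y z * y * f y * f z) * indicator {x - y<..} z"
    proof (cases "x \<le> z")
      case True
      have "c0 * (y * f y * f z) \<le> K y z * (y * f y * f z)"
        using K_ge[of y z] True assms(5,6) nn[of y] nn[of z] by (intro mult_right_mono) auto
      then have "ennreal (c0 * (y * f y) * f z) \<le> ennreal (K y z * y * f y * f z)"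
        by (intro ennreal_leI) (simp only: mult.assoc)
      then show ?thesis
        using True assms(5,6) \<open>0 \<le> c0\<close> nn[of y] nn[of z]
        by (simp add: ennreal_mult[symmetric] mult_ac)
    qed simp
  qed
  finally show ?thesis .
qed

lemma self_similar_profile_lower_bound:
  fixes f :: "real \<Rightarrow> real" and c0 :: real
  assumes "self_similar_profile K f" and meas[measurable]: "f \<in> borel_measurable borel"
    and nn: "\<And>x. 0 \<le> f x" and "0 \<le> c0" and K_ge: "\<And>x y. 0 < x \<Longrightarrow> 0 < y \<Longrightarrow> c0 \<le> K x y"
  shows "AE x in lborel. 0 < x \<longrightarrow>
           ennreal c0 * (\<integral>\<^sup>+y. ennreal (y * f y) * indicator {0<..<x} y \<partial>lborel)
             * (\<integral>\<^sup>+z. ennreal (f z) * indicator {x..} z \<partial>lborel) \<le> ennreal (x\<^sup>2 * f x)"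
  using assms(1)[unfolded self_similar_profile_def, THEN conjunct2, THEN conjunct2, THEN conjunct2]
proof eventually_elim
  case (elim x)
  show ?case
  proof
    assume "0 < x"
    define G where "G = (\<integral>\<^sup>+z. ennreal (f z) * indicator {x..} z \<partial>lborel)"
    have "ennreal c0 * (\<integral>\<^sup>+y. ennreal (y * f y) * indicator {0<..<x} y \<partial>lborel) * G
        = (\<integral>\<^sup>+y. ennreal c0 * (ennreal (y * f y) * indicator {0<..<x} y) * G \<partial>lborel)"
      by (simp add: nn_integral_cmult nn_integral_multc)
    also have "\<dots> \<le> (\<integral>\<^sup>+y. (\<integral>\<^sup>+z. ennreal (K y z * y * f y * f z) * indicator {x - y<..} z \<partial>lborel)
                        * indicator {0<..<x} y \<partial>lborel)"
    proof (intro nn_integral_mono)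
      fix y
      show "ennreal c0 * (ennreal (y * f y) * indicator {0<..<x} y) * G
          \<le> (\<integral>\<^sup>+z. ennreal (K y z * y * f y * f z) * indicator {x - y<..} z \<partial>lborel) * indicator {0<..<x} y"
        using nn_integral_kernel_ge_tail[where x=x and y=y, OF meas nn \<open>0 \<le> c0\<close> K_ge] \<open>0 \<le> c0\<close> nn[of y]
        unfolding G_def by (cases "0 < y \<and> y < x") (auto simp: ennreal_mult mult_ac)
    qed
    also have "\<dots> = ennreal (x\<^sup>2 * f x)" using elim \<open>0 < x\<close> by simp
    finally show "ennreal c0 * (\<integral>\<^sup>+y. ennreal (y * f y) * indicator {0<..<x} y \<partial>lborel) * G
        \<le> ennreal (x\<^sup>2 * f x)" .
  qed
qed

lemma nn_integral_Ico_finite: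
  fixes f :: "real \<Rightarrow> real"
  assumes "\<And>x. 0 \<le> f x" and "\<And>a b. 0 < a \<Longrightarrow> set_integrable lborel {a..b} f" and "0 < a"
  shows "(\<integral>\<^sup>+x. ennreal (f x) * indicator {a..<b} x \<partial>lborel) \<noteq> \<infinity>"
proof -
  have "(\<integral>\<^sup>+x. ennreal (f x) * indicator {a..<b} x \<partial>lborel)
      \<le> (\<integral>\<^sup>+x. ennreal (norm (indicator {a..b} x *\<^sub>R f x)) \<partial>lborel)"
    using assms(1) by (intro nn_integral_mono) (auto simp: indicator_def)
  also have "\<dots> < \<infinity>"
    using assms(2)[of a b] \<open>0 < a\<close> unfolding set_integrable_def integrable_iff_bounded by simp
  finally show ?thesis by simp
qed

lemma running_integral_growth_of_lower_bound:
  fixes f :: "real \<Rightarrow> real" and c0 \<delta> \<eta> :: real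
  assumes nn: "\<And>x. 0 \<le> f x" and "0 < \<eta>"
    and lower: "AE x in lborel. 0 < x \<longrightarrow>
           ennreal c0 * (\<integral>\<^sup>+y. ennreal (y * f y) * indicator {0<..<x} y \<partial>lborel)
             * (\<integral>\<^sup>+z. ennreal (f z) * indicator {x..} z \<partial>lborel) \<le> ennreal (x\<^sup>2 * f x)"
    and large: "2 \<le> ennreal c0 * (\<integral>\<^sup>+z. ennreal (f z) * indicator {\<delta>..} z \<partial>lborel)"
  shows "AE x in lborel. \<eta> < x \<and> x < \<delta> \<longrightarrow>
           ennreal (2 * 1) * (\<integral>\<^sup>+y. ennreal (y * f y) * indicator {\<eta>..<x} y \<partial>lborel)
             \<le> ennreal x * ennreal (x * f x)"
  using lower
proof eventually_elim
  case (elim x)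
  show ?case
  proof
    assume x: "\<eta> < x \<and> x < \<delta>"
    let ?\<Phi>\<^sub>\<eta> = "\<integral>\<^sup>+y. ennreal (y * f y) * indicator {\<eta>..<x} y \<partial>lborel"
    let ?\<Phi> = "\<integral>\<^sup>+y. ennreal (y * f y) * indicator {0<..<x} y \<partial>lborel"
    let ?G = "\<lambda>a. \<integral>\<^sup>+z. ennreal (f z) * indicator {a..} z \<partial>lborel"
    have "?\<Phi>\<^sub>\<eta> \<le> ?\<Phi>"
      using \<open>0 < \<eta>\<close> by (intro nn_integral_mono) (auto simp: indicator_def)
    then have "ennreal (2 * 1) * ?\<Phi>\<^sub>\<eta> \<le> (ennreal c0 * ?G \<delta>) * ?\<Phi>"
      using large by (intro mult_mono) simp_all
    also have "\<dots> \<le> (ennreal c0 * ?G x) * ?\<Phi>"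
      using x by (intro mult_right_mono mult_left_mono nn_integral_mono) (auto simp: indicator_def)
    also have "\<dots> \<le> ennreal (x\<^sup>2 * f x)" using elim x \<open>0 < \<eta>\<close> by (simp add: mult_ac)
    also have "\<dots> = ennreal x * ennreal (x * f x)"
      using x \<open>0 < \<eta>\<close> nn[of x] by (simp add: ennreal_mult[symmetric] power2_eq_square mult_ac)
    finally show "ennreal (2 * 1) * ?\<Phi>\<^sub>\<eta> \<le> ennreal x * ennreal (x * f x)" .
  qed
qed

lemma nn_integral_Ioo_le_of_lower_bound:
  fixes f :: "real \<Rightarrow> real" and c0 \<delta> :: real
  assumes [measurable]: "f \<in> borel_measurable borel" and nn: "\<And>x. 0 \<le> f x"
    and locally_integrable: "\<And>a b. 0 < a \<Longrightarrow> set_integrable lborel {a..b} f" and "0 < \<delta>"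
    and lower: "AE x in lborel. 0 < x \<longrightarrow>
           ennreal c0 * (\<integral>\<^sup>+y. ennreal (y * f y) * indicator {0<..<x} y \<partial>lborel)
             * (\<integral>\<^sup>+z. ennreal (f z) * indicator {x..} z \<partial>lborel) \<le> ennreal (x\<^sup>2 * f x)"
    and large: "2 \<le> ennreal c0 * (\<integral>\<^sup>+z. ennreal (f z) * indicator {\<delta>..} z \<partial>lborel)"
  shows "(\<integral>\<^sup>+x. ennreal (f x) * indicator {0<..<\<delta>} x \<partial>lborel)
         \<le> ennreal (2 / \<delta>) * (\<integral>\<^sup>+y. ennreal (y * f y) * indicator {0<..} y \<partial>lborel)"
proof -
  define M where "M = (\<integral>\<^sup>+y. ennreal (y * f y) * indicator {0<..} y \<partial>lborel)"
  have "(\<integral>\<^sup>+x. ennreal (f x) * indicator {\<eta>..<\<delta>} x \<partial>lborel) \<le> ennreal (2 / \<delta>) * M" if "0 < \<eta>" for \<eta>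
  proof -
    have weight: "ennreal (y powr -1) * ennreal (y * f y) * indicator {\<eta>..<\<delta>} y
        = ennreal (f y) * indicator {\<eta>..<\<delta>} y" for y
      using \<open>0 < \<eta>\<close> nn[of y]
      by (cases "\<eta> \<le> y") (auto simp: indicator_def ennreal_mult[symmetric])
    have "(\<integral>\<^sup>+x. ennreal (f x) * indicator {\<eta>..<\<delta>} x \<partial>lborel)
        \<le> ennreal (2 * \<delta> powr -1) * (\<integral>\<^sup>+y. ennreal (y * f y) * indicator {\<eta>..<\<delta>} y \<partial>lborel)"
      using nn_integral_powr_weight_le[of "\<lambda>y. ennreal (y * f y)" 1 \<eta> \<delta>] \<open>0 < \<eta>\<close>
        running_integral_growth_of_lower_bound[OF nn \<open>0 < \<eta>\<close> lower large]
        nn_integral_Ico_finite[OF nn locally_integrable \<open>0 < \<eta>\<close>, of \<delta>]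
      by (simp only: weight) simp
    also have "\<dots> \<le> ennreal (2 / \<delta>) * M"
      unfolding M_def using \<open>0 < \<eta>\<close> \<open>0 < \<delta>\<close>
      by (intro mult_mono nn_integral_mono) (auto simp: indicator_def)
    finally show ?thesis .
  qed
  then have "(SUP n. \<integral>\<^sup>+x. ennreal (f x) * indicator {\<delta>/Suc n..<\<delta>} x \<partial>lborel) \<le> ennreal (2 / \<delta>) * M"
    using \<open>0 < \<delta>\<close> by (intro SUP_least) simp
  then show ?thesis
    unfolding M_def by (subst nn_integral_Ioo_eq_SUP_Ico) (use \<open>0 < \<delta>\<close> in auto)
qed

lemma nn_integral_Ioo_finite_of_lower_bound:
  fixes f :: "real \<Rightarrow> real" and b c0 :: real
  assumes [measurable]: "f \<in> borel_measurable borel" and nn: "\<And>x. 0 \<le> f x"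
    and locally_integrable: "\<And>a b. 0 < a \<Longrightarrow> set_integrable lborel {a..b} f"
    and moment: "(\<integral>\<^sup>+y. ennreal (y * f y) * indicator {0<..} y \<partial>lborel) \<noteq> \<infinity>"
    and "0 < b" and "0 < c0"
    and lower: "AE x in lborel. 0 < x \<longrightarrow>
           ennreal c0 * (\<integral>\<^sup>+y. ennreal (y * f y) * indicator {0<..<x} y \<partial>lborel)
             * (\<integral>\<^sup>+z. ennreal (f z) * indicator {x..} z \<partial>lborel) \<le> ennreal (x\<^sup>2 * f x)"
  shows "(\<integral>\<^sup>+x. ennreal (f x) * indicator {0<..<b} x \<partial>lborel) \<noteq> \<infinity>"
proof
  assume infinite: "(\<integral>\<^sup>+x. ennreal (f x) * indicator {0<..<b} x \<partial>lborel) = \<infinity>"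
  then have "(SUP n. \<integral>\<^sup>+x. ennreal (f x) * indicator {b/Suc n..<b} x \<partial>lborel) = \<infinity>"
    using nn_integral_Ioo_eq_SUP_Ico[of "\<lambda>x. ennreal (f x)" b] \<open>0 < b\<close> by simp
  then obtain n where n: "ennreal (2 / c0) < (\<integral>\<^sup>+x. ennreal (f x) * indicator {b/Suc n..<b} x \<partial>lborel)"
    by (auto dest: spec[of _ "ennreal (2 / c0)"])
  define \<delta> where "\<delta> = b / Suc n"
  have "0 < \<delta>" unfolding \<delta>_def using \<open>0 < b\<close> by simp
  have "ennreal (2 / c0) \<le> (\<integral>\<^sup>+x. ennreal (f x) * indicator {\<delta>..} x \<partial>lborel)"
  proof -
    have "(\<integral>\<^sup>+x. ennreal (f x) * indicator {\<delta>..<b} x \<partial>lborel) \<le> (\<integral>\<^sup>+x. ennreal (f x) * indicator {\<delta>..} x \<partial>lborel)"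
      by (intro nn_integral_mono) (simp add: indicator_def)
    then show ?thesis using n unfolding \<delta>_def by simp
  qed
  then have "ennreal c0 * ennreal (2 / c0) \<le> ennreal c0 * (\<integral>\<^sup>+x. ennreal (f x) * indicator {\<delta>..} x \<partial>lborel)"
    by (rule mult_left_mono) simp
  then have "(\<integral>\<^sup>+x. ennreal (f x) * indicator {0<..<\<delta>} x \<partial>lborel)
      \<le> ennreal (2 / \<delta>) * (\<integral>\<^sup>+y. ennreal (y * f y) * indicator {0<..} y \<partial>lborel)"
    using \<open>0 < c0\<close> by (intro nn_integral_Ioo_le_of_lower_bound[OF _ nn locally_integrable \<open>0 < \<delta>\<close> lower])
      (simp_all add: ennreal_mult[symmetric])
  also have "\<dots> < \<infinity>" using moment by (simp add: ennreal_mult_less_top less_top)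
  finally have "(\<integral>\<^sup>+x. ennreal (f x) * indicator {0<..<\<delta>} x \<partial>lborel)
      + (\<integral>\<^sup>+x. ennreal (f x) * indicator {\<delta>..<b} x \<partial>lborel) \<noteq> \<infinity>"
    using nn_integral_Ico_finite[OF nn locally_integrable \<open>0 < \<delta>\<close>, of b] by simp
  moreover have "(\<integral>\<^sup>+x. ennreal (f x) * indicator {0<..<b} x \<partial>lborel)
      \<le> (\<integral>\<^sup>+x. ennreal (f x) * indicator {0<..<\<delta>} x \<partial>lborel)
        + (\<integral>\<^sup>+x. ennreal (f x) * indicator {\<delta>..<b} x \<partial>lborel)"
    by (subst nn_integral_add[symmetric]) (auto intro!: nn_integral_mono simp: indicator_def)
  ultimately show False using infinite by (simp add: top_unique)
qed

lemma set_integrable_iff_nn_integral_finite: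
  fixes f :: "real \<Rightarrow> real"
  assumes [measurable]: "f \<in> borel_measurable borel" "A \<in> sets borel" and "\<And>x. x \<in> A \<Longrightarrow> 0 \<le> f x"
  shows "set_integrable lborel A f \<longleftrightarrow> (\<integral>\<^sup>+x. ennreal (f x) * indicator A x \<partial>lborel) \<noteq> \<infinity>"
proof -
  have "(\<integral>\<^sup>+x. ennreal (norm (indicator A x *\<^sub>R f x)) \<partial>lborel) = (\<integral>\<^sup>+x. ennreal (f x) * indicator A x \<partial>lborel)"
    using assms(3) by (intro nn_integral_cong) (auto simp: indicator_def)
  then show ?thesis
    unfolding set_integrable_def integrable_iff_bounded by (simp add: less_top)
qed

lemma self_similar_profile_integrable_near_zero:
  fixes f :: "real \<Rightarrow> real" and c0 :: real
  assumes profile: "self_similar_profile K f" and meas[measurable]: "f \<in> borel_measurable borel"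
    and nn: "\<And>x. 0 \<le> f x" and "0 < c0" and K_ge: "\<And>x y. 0 < x \<Longrightarrow> 0 < y \<Longrightarrow> c0 \<le> K x y"
  shows "set_integrable lborel {0<..<1} f"
proof -
  have locally_integrable: "\<And>a b. 0 < a \<Longrightarrow> set_integrable lborel {a..b} f"
    and first_moment: "set_integrable lborel {0<..} (\<lambda>x. x * f x)"
    using profile unfolding self_similar_profile_def by auto
  have "(\<integral>\<^sup>+x. ennreal (f x) * indicator {0<..<1} x \<partial>lborel) \<noteq> \<infinity>"
  proof (rule nn_integral_Ioo_finite_of_lower_bound[OF meas nn locally_integrable _ _ \<open>0 < c0\<close>])
    show "(\<integral>\<^sup>+x. ennreal (x * f x) * indicator {0<..} x \<partial>lborel) \<noteq> \<infinity>"
      using first_moment nn by (subst (asm) set_integrable_iff_nn_integral_finite) auto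
    show "AE x in lborel. 0 < x \<longrightarrow>
        ennreal c0 * (\<integral>\<^sup>+y. ennreal (y * f y) * indicator {0<..<x} y \<partial>lborel)
          * (\<integral>\<^sup>+z. ennreal (f z) * indicator {x..} z \<partial>lborel) \<le> ennreal (x\<^sup>2 * f x)"
      using \<open>0 < c0\<close> by (intro self_similar_profile_lower_bound[OF profile meas nn _ K_ge]) auto
  qed auto
  then show ?thesis
    using nn by (subst set_integrable_iff_nn_integral_finite) auto
qed

section \<open>Dominated convergence\<close>

lemma (in pair_sigma_finite) integrable_product:
  fixes u v :: "_ \<Rightarrow> real"
  assumes u: "integrable M1 u" and v: "integrable M2 v"
  shows "integrable (M1 \<Otimes>\<^sub>M M2) (\<lambda>p. u (fst p) * v (snd p))"
proof (rule integrableI_bounded)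
  have [measurable]: "u \<in> borel_measurable M1" "v \<in> borel_measurable M2"
    using u v by (auto dest: borel_measurable_integrable)
  show "(\<lambda>p. u (fst p) * v (snd p)) \<in> borel_measurable (M1 \<Otimes>\<^sub>M M2)" by measurable
  have "(\<integral>\<^sup>+p. ennreal (norm (u (fst p) * v (snd p))) \<partial>(M1 \<Otimes>\<^sub>M M2))
      = (\<integral>\<^sup>+x. \<integral>\<^sup>+y. ennreal (norm (u x)) * ennreal (norm (v y)) \<partial>M2 \<partial>M1)"
    by (subst M2.nn_integral_fst[symmetric]) (auto simp: abs_mult ennreal_mult)
  also have "\<dots> = (\<integral>\<^sup>+x. ennreal (norm (u x)) \<partial>M1) * (\<integral>\<^sup>+y. ennreal (norm (v y)) \<partial>M2)"
    by (simp add: nn_integral_cmult nn_integral_multc)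
  also have "\<dots> < \<infinity>"
    using u v unfolding integrable_iff_bounded by (simp add: ennreal_mult_less_top)
  finally show "(\<integral>\<^sup>+p. ennreal (norm (u (fst p) * v (snd p))) \<partial>(M1 \<Otimes>\<^sub>M M2)) < \<infinity>" .
qed

lemma one_minus_exp_le_min:
  fixes q a :: real
  assumes "0 \<le> q" "q \<le> 1" "0 \<le> a"
  shows "0 \<le> 1 - exp (- q * a)" "1 - exp (- q * a) \<le> min 1 a"
proof -
  show "0 \<le> 1 - exp (- q * a)" using assms by simp
  have "1 - exp (- q * a) \<le> q * a" using exp_ge_add_one_self[of "- q * a"] by simp
  also have "\<dots> \<le> a" using assms by (simp add: mult_left_le_one_le)
  finally show "1 - exp (- q * a) \<le> min 1 a" by simp
qed

lemma powr_mult_min_le_max: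
  fixes x \<gamma> :: real
  assumes "0 < x" "\<bar>\<gamma>\<bar> \<le> 1"
  shows "x powr \<gamma> * min 1 x \<le> max 1 x"
proof (cases "x \<le> 1")
  case True
  have "x powr \<gamma> * x = x powr (\<gamma> + 1)" using \<open>0 < x\<close> by (simp add: powr_add)
  also have "\<dots> \<le> 1" using True assms by (intro powr_le1) auto
  finally show ?thesis using True by simp
next
  case False
  then have "x powr \<gamma> \<le> x powr 1" using assms by (intro powr_mono) auto
  then show ?thesis using False by simp
qed

lemma kernel_weight_le:
  fixes a b \<alpha> :: real
  assumes "0 < a" "0 < b" "0 \<le> \<alpha>" "\<alpha> \<le> 1"
  shows "(1 + (a / b) powr \<alpha> + (b / a) powr \<alpha>) * (min 1 a * min 1 b) \<le> 3 * (max 1 a * max 1 b)"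
proof -
  have cross: "(x / y) powr \<alpha> * (min 1 x * min 1 y) \<le> max 1 x * max 1 y" if "0 < x" "0 < y" for x y
  proof -
    have "(x / y) powr \<alpha> * (min 1 x * min 1 y) = (x powr \<alpha> * min 1 x) * (y powr -\<alpha> * min 1 y)"
      using that powr_divide[of x y \<alpha>] by (simp add: powr_minus_divide)
    also have "\<dots> \<le> max 1 x * max 1 y"
      using that assms by (intro mult_mono powr_mult_min_le_max) auto
    finally show ?thesis .
  qed
  have "min 1 a * min 1 b \<le> max 1 a * max 1 b" using assms by (intro mult_mono) auto
  then show ?thesis
    using cross[OF \<open>0 < a\<close> \<open>0 < b\<close>] cross[OF \<open>0 < b\<close> \<open>0 < a\<close>] by (simp add: algebra_simps)
qed

lemma kernel_assumptions_abs_le: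
  assumes "kernel_assumptions \<alpha> \<epsilon> C0 K" "0 < x" "0 < y"
  shows "\<bar>K x y - 2\<bar> \<le> \<epsilon> * (1 + (x / y) powr \<alpha> + (y / x) powr \<alpha>)"
proof -
  have "- \<epsilon> \<le> K x y - 2" "K x y - 2 \<le> \<epsilon> * ((x / y) powr \<alpha> + (y / x) powr \<alpha>)" "0 < \<epsilon>"
    using assms unfolding kernel_assumptions_def by auto
  moreover have "0 \<le> \<epsilon> * ((x / y) powr \<alpha> + (y / x) powr \<alpha>)" using \<open>0 < \<epsilon>\<close> by simp
  moreover have "\<epsilon> * (1 + (x / y) powr \<alpha> + (y / x) powr \<alpha>) = \<epsilon> + \<epsilon> * ((x / y) powr \<alpha> + (y / x) powr \<alpha>)"
    by (simp add: algebra_simps)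
  ultimately show ?thesis unfolding abs_le_iff by linarith
qed

lemma kernel_assumptions_measurable:
  assumes "kernel_assumptions \<alpha> \<epsilon> C0 K"
  shows "(\<lambda>p. indicator ({0<..} \<times> {0<..}) p * (K (fst p) (snd p) - 2))
           \<in> borel_measurable (lborel \<Otimes>\<^sub>M lborel)"
proof -
  let ?Q = "{0<..} \<times> {0<..} :: (real \<times> real) set"
  have "continuous_on ?Q (\<lambda>p. K (fst p) (snd p) - 2)"
  proof (intro continuous_on_diff continuous_on_const continuous_at_imp_continuous_on ballI)
    fix p assume "p \<in> ?Q"
    then have "(\<lambda>p. K (fst p) (snd p)) differentiable (at p)"
      using assms unfolding kernel_assumptions_def by (cases p) auto
    then show "isCont (\<lambda>p. K (fst p) (snd p)) p"
      by (rule differentiable_imp_continuous_within)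
  qed
  moreover have "?Q \<in> sets borel" by (intro borel_open open_Times) auto
  ultimately have "(\<lambda>p. indicator ?Q p *\<^sub>R (K (fst p) (snd p) - 2)) \<in> borel_measurable borel"
    by (rule borel_measurable_continuous_on_indicator[rotated])
  then show ?thesis unfolding lborel_prod by simp
qed

lemma Mff_integrand_abs_le:
  fixes w u v a b q \<alpha> \<epsilon> :: real
  assumes "0 < a" "0 < b" "0 \<le> q" "q \<le> 1" "0 \<le> u" "0 \<le> v" "0 \<le> \<alpha>" "\<alpha> \<le> 1" "0 \<le> \<epsilon>"
    and w: "\<bar>w\<bar> \<le> \<epsilon> * (1 + (a / b) powr \<alpha> + (b / a) powr \<alpha>)"
  shows "\<bar>w * (u * v * ((1 - exp (- q * a)) * (1 - exp (- q * b))))\<bar>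
           \<le> 3 * \<epsilon> * ((u * max 1 a) * (v * max 1 b))"
proof -
  note ea = one_minus_exp_le_min[of q a] and eb = one_minus_exp_le_min[of q b]
  have "\<bar>w * (u * v * ((1 - exp (- q * a)) * (1 - exp (- q * b))))\<bar>
      = \<bar>w\<bar> * (u * v) * ((1 - exp (- q * a)) * (1 - exp (- q * b)))"
    using assms ea eb by (simp add: abs_mult)
  also have "\<dots> \<le> \<epsilon> * (1 + (a / b) powr \<alpha> + (b / a) powr \<alpha>) * (u * v) * (min 1 a * min 1 b)"
    using assms ea eb by (intro mult_mono mult_right_mono) auto
  also have "\<dots> = \<epsilon> * (((1 + (a / b) powr \<alpha> + (b / a) powr \<alpha>) * (min 1 a * min 1 b)) * (u * v))"
    by (simp add: mult_ac)
  also have "\<dots> \<le> \<epsilon> * ((3 * (max 1 a * max 1 b)) * (u * v))"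
    using kernel_weight_le[of a b \<alpha>] assms by (intro mult_left_mono mult_right_mono) auto
  also have "\<dots> = 3 * \<epsilon> * ((u * max 1 a) * (v * max 1 b))" by (simp add: mult_ac)
  finally show ?thesis .
qed

lemma integrable_max_one_weight:
  fixes g :: "real \<Rightarrow> real"
  assumes [measurable]: "g \<in> borel_measurable borel" and nn: "\<And>x. 0 \<le> g x"
    and "set_integrable lborel {0<..} (\<lambda>x. x * g x)" and "set_integrable lborel {0<..<1} g"
  shows "integrable lborel (\<lambda>x. indicator {0<..} x * (g x * max 1 x))"
proof (rule Bochner_Integration.integrable_bound)
  show "integrable lborel (\<lambda>x. indicator {0<..} x * (x * g x) + indicator {0<..<1} x * g x)"
    using assms(3,4) unfolding set_integrable_def by simp
  show "AE x in lborel. norm (indicator {0<..} x * (g x * max 1 x))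
          \<le> norm (indicator {0<..} x * (x * g x) + indicator {0<..<1} x * g x)"
    using nn by (intro AE_I2) (auto simp: indicator_def max_def)
qed measurable

lemma Mff_tendsto_zero:
  fixes K :: "real \<Rightarrow> real \<Rightarrow> real" and g :: "real \<Rightarrow> real" and \<alpha> \<epsilon> :: real
  assumes [measurable]: "g \<in> borel_measurable borel" and nn: "\<And>x. 0 \<le> g x"
    and first_moment: "set_integrable lborel {0<..} (\<lambda>x. x * g x)"
    and mass: "set_integrable lborel {0<..<1} g"
    and K_meas: "(\<lambda>p. indicator ({0<..} \<times> {0<..}) p * (K (fst p) (snd p) - 2))
                   \<in> borel_measurable (lborel \<Otimes>\<^sub>M lborel)"
    and K_bound: "\<And>x y. 0 < x \<Longrightarrow> 0 < y \<Longrightarrow> \<bar>K x y - 2\<bar> \<le> \<epsilon> * (1 + (x / y) powr \<alpha> + (y / x) powr \<alpha>)"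
    and "0 \<le> \<alpha>" "\<alpha> \<le> 1"
  shows "(Mff K g \<longlongrightarrow> 0) (at_right 0)"
proof -
  define W where "W p = indicator ({0<..} \<times> {0<..}) p * (K (fst p) (snd p) - 2)" for p :: "real \<times> real"
  define s where "s t p = W p * (g (fst p) * g (snd p) *
      ((1 - exp (- inverse t * fst p)) * (1 - exp (- inverse t * snd p))))" for t :: real and p
  define \<rho> where "\<rho> x = indicator {0<..} x * (g x * max 1 x)" for x :: real
  have [measurable]: "W \<in> borel_measurable (lborel \<Otimes>\<^sub>M lborel)" using K_meas unfolding W_def .
  have "0 \<le> \<epsilon>" using K_bound[of 1 1] by simp
  have "integrable lborel \<rho>"
    unfolding \<rho>_def by (rule integrable_max_one_weight[OF _ nn first_moment mass]) measurable
  then have dominant: "integrable (lborel \<Otimes>\<^sub>M lborel) (\<lambda>p. 3 * \<epsilon> * (\<rho> (fst p) * \<rho> (snd p)))"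
    by (intro integrable_mult_right lborel_pair.integrable_product)
  have pointwise: "AE p in lborel \<Otimes>\<^sub>M lborel. ((\<lambda>t. s t p) \<longlongrightarrow> 0) at_top"
  proof (intro AE_I2)
    fix p :: "real \<times> real"
    have "((\<lambda>t. 1 - exp (- inverse t * a)) \<longlongrightarrow> 1 - exp (- 0 * a)) at_top" for a :: real
      by (intro tendsto_intros tendsto_inverse_0_at_top filterlim_ident)
    then have "((\<lambda>t. s t p) \<longlongrightarrow> W p * (g (fst p) * g (snd p) * (0 * 0))) at_top"
      unfolding s_def by (intro tendsto_intros) simp_all
    then show "((\<lambda>t. s t p) \<longlongrightarrow> 0) at_top" by simp
  qed
  have dominated: "\<forall>\<^sub>F t in at_top. AE p in lborel \<Otimes>\<^sub>M lborel. norm (s t p) \<le> 3 * \<epsilon> * (\<rho> (fst p) * \<rho> (snd p))"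
    using eventually_ge_at_top[of "1::real"]
  proof eventually_elim
    case (elim t)
    show ?case
    proof (intro AE_I2)
      fix p :: "real \<times> real"
      show "norm (s t p) \<le> 3 * \<epsilon> * (\<rho> (fst p) * \<rho> (snd p))"
      proof (cases "0 < fst p \<and> 0 < snd p")
        case True
        have "0 \<le> inverse t" "inverse t \<le> 1" using elim by (auto simp: inverse_le_1_iff)
        from Mff_integrand_abs_le[OF _ _ this nn nn \<open>0 \<le> \<alpha>\<close> \<open>\<alpha> \<le> 1\<close> \<open>0 \<le> \<epsilon>\<close> K_bound] True
        show ?thesis by (simp add: s_def W_def \<rho>_def mem_Times_iff)
      qed (use nn \<open>0 \<le> \<epsilon>\<close> in \<open>auto simp: s_def W_def \<rho>_def mem_Times_iff\<close>)
    qed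
  qed
  have "\<And>t. s t \<in> borel_measurable (lborel \<Otimes>\<^sub>M lborel)" unfolding s_def by measurable
  from integral_dominated_convergence_at_top[OF borel_measurable_const this dominant pointwise dominated]
  have "((\<lambda>t. integral\<^sup>L (lborel \<Otimes>\<^sub>M lborel) (s t)) \<longlongrightarrow> 0) at_top" by simp
  moreover have "Mff K g (inverse t) = 1/2 * integral\<^sup>L (lborel \<Otimes>\<^sub>M lborel) (s t)" for t
    unfolding Mff_def s_def W_def by (simp add: mult_ac)
  ultimately have "((\<lambda>t. Mff K g (inverse t)) \<longlongrightarrow> 1/2 * 0) at_top"
    by (simp only:) (intro tendsto_mult tendsto_const, simp)
  then show ?thesis by (simp add: filterlim_at_right_to_top)
qed

theorem lemma2p1:
  fixes \<alpha> \<epsilon> C0 c0 :: real and K :: "real \<Rightarrow> real \<Rightarrow> real" and f :: "real \<Rightarrow> real"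
  assumes "kernel_assumptions \<alpha> \<epsilon> C0 K"
    and "c0 > 0" and "\<forall>x>0. \<forall>y>0. K x y \<ge> c0"
    and "self_similar_profile K f"
  shows "(Mff K f \<longlongrightarrow> 0) (at_right 0)"
proof -
  \<comment> \<open>\<open>f\<close> is unconstrained on \<open>(-\<infinity>,0]\<close>; zeroing it there changes neither the equation nor \<open>Mff\<close>.\<close>
  define g where "g = (\<lambda>x. indicator {0<..} x * f x)"
  have profile: "self_similar_profile K g"
    unfolding g_def using assms(4) by (rule self_similar_profile_restrict_pos)
  then have first_moment: "set_integrable lborel {0<..} (\<lambda>x. x * g x)"
    unfolding self_similar_profile_def by auto
  have nn: "\<And>x. 0 \<le> g x" using assms(4) by (simp add: g_def self_similar_profile_def indicator_def)
  have measurable_g: "g \<in> borel_measurable borel"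
    unfolding g_def using assms(4) unfolding self_similar_profile_def
    by (intro borel_measurable_indicator_pos_times) blast
  have mass: "set_integrable lborel {0<..<1} g"
    using assms(3) by (intro self_similar_profile_integrable_near_zero[OF profile measurable_g nn \<open>c0 > 0\<close>]) auto
  have "0 \<le> \<alpha>" "\<alpha> \<le> 1" using assms(1) unfolding kernel_assumptions_def by auto
  from Mff_tendsto_zero[OF measurable_g nn first_moment mass kernel_assumptions_measurable[OF assms(1)]
      kernel_assumptions_abs_le[OF assms(1)] this]
  have "(Mff K g \<longlongrightarrow> 0) (at_right 0)" .
  then show ?thesis unfolding g_def Mff_restrict_pos[symmetric] .
qed

end
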